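(* Consider the Markov process described in the context with $K=1$, satisfying Assumption (A) and the ergodicity condition (E). For each $x\in\{-1,1\}^c$ let $\beta_{0,x}\in(0,1)$ be a root of $(\mathrm E_x)$, and for $i=1,\dots,c$ let \[\beta_{i,x}=\frac{F_i(\beta_{0,x})+x_iR_i(\beta_{0,x})}{2D_i(\beta_{0,x})}.\] Then the $2^c$ functions $W\ni\mathbf n\mapsto \beta_{0,x}^{n_0}\beta_{1,x}^{n_1}\cdots\beta_{c,x}^{n_c}$, $x\in\{-1,1\}^c$, are linearly independent on $W$.
   Context: Fix integers $c\ge 1$ and $K\ge1$ (in the claim $K=1$). Consider an irreducible continuous-time Markov process on $V\cup W$, where $V$ is finite and $W=\{\mathbf n=(n_0,\dots,n_c): n_0\in\{0,1,\dots\},\ n_i\in\{0,1\}\}$. For each $i\in\{1,\dots,c\}$ and integer $k\le K$ there are nonnegative rates $a_{k,i},b_{k,i},c_{k,i},d_{k,i}$. From $\mathbf n\in W$, for each $i$ and $k\in\{-n_0,\dots,K\}$, the process jumps (changing only coordinates $0$ and $i$) from $(n_0,n_i)=(n_0,0)$ to $(n_0+k,1)$ at rate $a_{k,i}$ and to $(n_0+k,0)$ at rate $b_{k,i}$, and from $(n_0,1)$ to $(n_0+k,1)$ at rate $c_{k,i}$ and to $(n_0+k,0)$ at rate $d_{k,i}$; from $\mathbf n$ it jumps into $V$ with total rate $\sum_i\sum_{k\le -n_0-1}((1-n_i)(a_{k,i}+b_{k,i})+n_i(c_{k,i}+d_{k,i}))$; no other transitions leave $W$, and from $V$ no transitions go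 to states with $n_0\ge K$. Let $A_i(z)=\sum_{k=-\infty}^K a_{k,i}z^{K-k}$ and similarly $B_i,C_i,D_i$ with $b,c,d$. Assumption (A): for each $i$: (i) $A_i(1),B_i(1),C_i(1),D_i(1)<\infty$; (ii) $A_i(1),D_i(1)>0$; (iii) $A_i'(1),B_i'(1),C_i'(1),D_i'(1)<\infty$; (iv) $a_{K,i}=0$ or $d_{K,i}=0$; (v) $b_{K,i}=c_{K,i}\ne0$. Ergodicity condition (E): $0<\sum_{i=1}^c\frac{1}{A_i(1)+D_i(1)}\bigl(D_i(1)(A_i'(1)-KA_i(1)+B_i'(1)-KB_i(1))+A_i(1)(C_i'(1)-KC_i(1)+D_i'(1)-KD_i(1))\bigr)$. Let $F_i(z)=z^K(A_i(1)+B_i(1)-C_i(1)-D_i(1))-B_i(z)+C_i(z)$. For real $\beta_0\in[0,1]$ let $R_i(\beta_0)=\sqrt{F_i(\beta_0)^2+4A_i(\beta_0)D_i(\beta_0)}$ (nonnegative square root). For $x\in\{-1,1\}^c$, equation $(\mathrm E_x)$ in the unknown $\beta_0$ is \[0=\sum_{i=1}^c\Bigl(x_iR_i(\beta_0)+B_i(\beta_0)+C_i(\beta_0)-\beta_0^K\bigl(A_i(1)+B_i(1)+C_i(1)+D_i(1)\bigr)\Bigr).\] *)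

theory Defs
  imports Complex_Main
begin

text \<open>A rate a_{k,i} with integer k \<le> 1 is stored as
  ra i m = a_{1-m,i}, m :: nat, so that A_i(z) = sum_m ra i m z^m.
  States of W are functions n :: nat \<Rightarrow> nat with n 0 = n_0,
  n i \<in> {0,1} for 1 \<le> i \<le> c and n i = 0 for i > c.\<close>

definition gf :: "(nat \<Rightarrow> real) \<Rightarrow> real \<Rightarrow> real" where
  "gf p z = (\<Sum>m. p m * z ^ m)"

definition gf' :: "(nat \<Rightarrow> real) \<Rightarrow> real" where
  "gf' p = (\<Sum>m. real m * p m)"

definition Wset :: "nat \<Rightarrow> (nat \<Rightarrow> nat) set" where
  "Wset c = {n. (\<forall>i. 1 \<le> i \<and> i \<le> c \<longrightarrow> n i \<le> 1) \<and> (\<forall>i. c < i \<longrightarrow> n i = 0)}"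

text \<open>positive-rate transitions inside W (k = 1 - m ranges over {-n_0,..,1})\<close>
definition wedge :: "nat \<Rightarrow> (nat \<Rightarrow> nat \<Rightarrow> real) \<Rightarrow> (nat \<Rightarrow> nat \<Rightarrow> real) \<Rightarrow>
    (nat \<Rightarrow> nat \<Rightarrow> real) \<Rightarrow> (nat \<Rightarrow> nat \<Rightarrow> real) \<Rightarrow> (nat \<Rightarrow> nat) \<Rightarrow> (nat \<Rightarrow> nat) \<Rightarrow> bool" where
  "wedge c ra rb rc rd n n' \<longleftrightarrow>
     (\<exists>i\<in>{1..c}. \<exists>m \<le> n 0 + 1.
        (n i = 0 \<and> ((ra i m > 0 \<and> n' = n(0 := n 0 + 1 - m, i := 1))
                   \<or> (rb i m > 0 \<and> n' = n(0 := n 0 + 1 - m, i := 0)))) \<or>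
        (n i = 1 \<and> ((rc i m > 0 \<and> n' = n(0 := n 0 + 1 - m, i := 1))
                   \<or> (rd i m > 0 \<and> n' = n(0 := n 0 + 1 - m, i := 0)))))"

text \<open>total rate from n into V (k \<le> -n_0-1, i.e. m \<ge> n_0+2)\<close>
definition exitrate :: "nat \<Rightarrow> (nat \<Rightarrow> nat \<Rightarrow> real) \<Rightarrow> (nat \<Rightarrow> nat \<Rightarrow> real) \<Rightarrow>
    (nat \<Rightarrow> nat \<Rightarrow> real) \<Rightarrow> (nat \<Rightarrow> nat \<Rightarrow> real) \<Rightarrow> (nat \<Rightarrow> nat) \<Rightarrow> real" where
  "exitrate c ra rb rc rd n =
     (\<Sum>i=1..c. if n i = 0 then (\<Sum>j. ra i (j + n 0 + 2) + rb i (j + n 0 + 2))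
                else (\<Sum>j. rc i (j + n 0 + 2) + rd i (j + n 0 + 2)))"

text \<open>There is an irreducible continuous-time Markov process on V \<union> W (V finite)
  whose W-part has the prescribed rates; irreducibility = every state reaches
  every other state along positive-rate transitions.\<close>
definition irreducible_model :: "nat \<Rightarrow> (nat \<Rightarrow> nat \<Rightarrow> real) \<Rightarrow> (nat \<Rightarrow> nat \<Rightarrow> real) \<Rightarrow>
    (nat \<Rightarrow> nat \<Rightarrow> real) \<Rightarrow> (nat \<Rightarrow> nat \<Rightarrow> real) \<Rightarrow> bool" where
  "irreducible_model c ra rb rc rd \<longleftrightarrow>
    (\<exists>(V :: nat set) (qVV :: nat \<Rightarrow> nat \<Rightarrow> real) (qVW :: nat \<Rightarrow> (nat \<Rightarrow> nat) \<Rightarrow> real)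
       (qWV :: (nat \<Rightarrow> nat) \<Rightarrow> nat \<Rightarrow> real).
       finite V \<and>
       (\<forall>v w. 0 \<le> qVV v w) \<and> (\<forall>v n. 0 \<le> qVW v n) \<and> (\<forall>n v. 0 \<le> qWV n v) \<and>
       (\<forall>v n. 1 \<le> n 0 \<longrightarrow> qVW v n = 0) \<and>
       (\<forall>n\<in>Wset c. (\<Sum>v\<in>V. qWV n v) = exitrate c ra rb rc rd n) \<and>
       (let S = Inl ` V \<union> Inr ` Wset c;
            E = {(Inl v, Inl w) | v w. v \<in> V \<and> w \<in> V \<and> 0 < qVV v w}
              \<union> {(Inl v, Inr n) | v n. v \<in> V \<and> n \<in> Wset c \<and> 0 < qVW v n}
              \<union> {(Inr n, Inl v) | n v. n \<in> Wset c \<and> v \<in> V \<and> 0 < qWV n v}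
              \<union> {(Inr n, Inr n') | n n'. n \<in> Wset c \<and> wedge c ra rb rc rd n n'}
        in \<forall>s\<in>S. \<forall>t\<in>S. (s, t) \<in> E\<^sup>*))"

definition assumption_A :: "nat \<Rightarrow> (nat \<Rightarrow> nat \<Rightarrow> real) \<Rightarrow> (nat \<Rightarrow> nat \<Rightarrow> real) \<Rightarrow>
    (nat \<Rightarrow> nat \<Rightarrow> real) \<Rightarrow> (nat \<Rightarrow> nat \<Rightarrow> real) \<Rightarrow> bool" where
  "assumption_A c ra rb rc rd \<longleftrightarrow>
    (\<forall>i\<in>{1..c}.
       (\<forall>m. 0 \<le> ra i m \<and> 0 \<le> rb i m \<and> 0 \<le> rc i m \<and> 0 \<le> rd i m) \<and>
       summable (ra i) \<and> summable (rb i) \<and> summable (rc i) \<and> summable (rd i) \<and>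
       gf (ra i) 1 > 0 \<and> gf (rd i) 1 > 0 \<and>
       summable (\<lambda>m. real m * ra i m) \<and> summable (\<lambda>m. real m * rb i m) \<and>
       summable (\<lambda>m. real m * rc i m) \<and> summable (\<lambda>m. real m * rd i m) \<and>
       (ra i 0 = 0 \<or> rd i 0 = 0) \<and>
       rb i 0 = rc i 0 \<and> rb i 0 \<noteq> 0)"

definition ergodic_E :: "nat \<Rightarrow> (nat \<Rightarrow> nat \<Rightarrow> real) \<Rightarrow> (nat \<Rightarrow> nat \<Rightarrow> real) \<Rightarrow>
    (nat \<Rightarrow> nat \<Rightarrow> real) \<Rightarrow> (nat \<Rightarrow> nat \<Rightarrow> real) \<Rightarrow> bool" where
  "ergodic_E c ra rb rc rd \<longleftrightarrow>
    0 < (\<Sum>i=1..c. 1 / (gf (ra i) 1 + gf (rd i) 1) *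
          (gf (rd i) 1 * (gf' (ra i) - gf (ra i) 1 + gf' (rb i) - gf (rb i) 1)
           + gf (ra i) 1 * (gf' (rc i) - gf (rc i) 1 + gf' (rd i) - gf (rd i) 1)))"

definition Ffun :: "(nat \<Rightarrow> real) \<Rightarrow> (nat \<Rightarrow> real) \<Rightarrow> (nat \<Rightarrow> real) \<Rightarrow> (nat \<Rightarrow> real) \<Rightarrow> real \<Rightarrow> real" where
  "Ffun a b cc d z = z * (gf a 1 + gf b 1 - gf cc 1 - gf d 1) - gf b z + gf cc z"

definition Rfun :: "(nat \<Rightarrow> real) \<Rightarrow> (nat \<Rightarrow> real) \<Rightarrow> (nat \<Rightarrow> real) \<Rightarrow> (nat \<Rightarrow> real) \<Rightarrow> real \<Rightarrow> real" where
  "Rfun a b cc d z = sqrt ((Ffun a b cc d z)\<^sup>2 + 4 * gf a z * gf d z)"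

definition signs :: "nat \<Rightarrow> (nat \<Rightarrow> real) set" where
  "signs c = {x. (\<forall>i\<in>{1..c}. x i = 1 \<or> x i = -1) \<and> (\<forall>i. i \<notin> {1..c} \<longrightarrow> x i = 0)}"

definition eq_Ex :: "nat \<Rightarrow> (nat \<Rightarrow> nat \<Rightarrow> real) \<Rightarrow> (nat \<Rightarrow> nat \<Rightarrow> real) \<Rightarrow>
    (nat \<Rightarrow> nat \<Rightarrow> real) \<Rightarrow> (nat \<Rightarrow> nat \<Rightarrow> real) \<Rightarrow> (nat \<Rightarrow> real) \<Rightarrow> real \<Rightarrow> bool" where
  "eq_Ex c ra rb rc rd x z \<longleftrightarrow>
    0 = (\<Sum>i=1..c. x i * Rfun (ra i) (rb i) (rc i) (rd i) z + gf (rb i) z + gf (rc i) z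
          - z * (gf (ra i) 1 + gf (rb i) 1 + gf (rc i) 1 + gf (rd i) 1))"

definition beta_i :: "(nat \<Rightarrow> real) \<Rightarrow> (nat \<Rightarrow> real) \<Rightarrow> (nat \<Rightarrow> real) \<Rightarrow> (nat \<Rightarrow> real) \<Rightarrow> real \<Rightarrow> real \<Rightarrow> real" where
  "beta_i a b cc d s z = (Ffun a b cc d z + s * Rfun a b cc d z) / (2 * gf d z)"

end

theory Submission imports Defs "HOL-Library.FuncSet" begin

text \<open>Evaluate a linear relation at the states n = (k, 1_E) with E \<subseteq> {1..c}. Because
  n_0 = k is unrestricted and powers with distinct positive bases are linearly independent,
  the relation splits into one relation on each level set of beta_0. On such a level set
  beta_i takes two distinct values at x_i = 1 and x_i = -1 (since R_i > 0), and the
  products of the beta_i over the sets E span every function of x, in particular the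
  indicator of a single sign vector, the product of the affine interpolations
  (beta_i(x_i) - beta_i(-x0_i)) / (beta_i(x0_i) - beta_i(-x0_i)).
  Only 0 < beta_0 < 1 and the positivity part of (A) are used.\<close>

lemma gf_pos:
  assumes "\<forall>m. 0 \<le> p m" "summable p" "gf p 1 > 0" "0 < z" "z < 1"
  shows "gf p z > 0"
proof -
  have "suminf p > 0" using assms(3) by (simp add: gf_def)
  then obtain m where m: "p m > 0"
    using assms(1) by (metis less_eq_real_def suminf_zero ext)
  have "summable (\<lambda>m. p m * z ^ m)"
    by (rule summable_comparison_test[OF _ assms(2)])
       (use assms in \<open>auto intro!: exI[of _ 0] simp: abs_mult mult_left_le power_le_one\<close>)
  then have "0 < (\<Sum>m. p m * z ^ m)"
    by (rule suminf_pos2[of _ m]) (use assms m in auto)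
  then show ?thesis by (simp add: gf_def)
qed

lemma beta_i_plus_ne_minus:
  assumes "gf a z > 0" "gf d z > 0"
  shows "beta_i a b cc d 1 z \<noteq> beta_i a b cc d (-1) z"
proof -
  have "Rfun a b cc d z > 0"
    unfolding Rfun_def using assms by (intro real_sqrt_gt_zero) (simp add: add_nonneg_pos)
  then show ?thesis using assms(2) by (simp add: beta_i_def divide_simps)
qed

lemma assumption_A_beta_i_sign_flip:
  assumes "assumption_A c ra rb rc rd" "i \<in> {1..c}" "0 < z" "z < 1" "s = 1 \<or> s = -1"
  shows "beta_i (ra i) (rb i) (rc i) (rd i) s z \<noteq> beta_i (ra i) (rb i) (rc i) (rd i) (- s) z"
proof -
  have "\<forall>m. 0 \<le> ra i m" "summable (ra i)" "gf (ra i) 1 > 0"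
    and "\<forall>m. 0 \<le> rd i m" "summable (rd i)" "gf (rd i) 1 > 0"
    using assms(1,2) unfolding assumption_A_def by blast+
  then have "gf (ra i) z > 0" "gf (rd i) z > 0" using gf_pos assms(3,4) by blast+
  then have "beta_i (ra i) (rb i) (rc i) (rd i) 1 z \<noteq> beta_i (ra i) (rb i) (rc i) (rd i) (-1) z"
    by (rule beta_i_plus_ne_minus)
  then show ?thesis using assms(5) by auto
qed

lemma dominant_power_coefficient_zero:
  fixes h :: "real \<Rightarrow> real"
  assumes "finite T" "M \<in> T" "M \<noteq> 0" "\<forall>t\<in>T - {M}. \<bar>t\<bar> < \<bar>M\<bar>"
    and "\<forall>k. (\<Sum>t\<in>T. h t * t ^ k) = 0"
  shows "h M = 0"
proof -
  have scaled: "(\<Sum>t\<in>T. h t * (t / M) ^ k) = 0" for k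
    using assms(5) by (simp add: power_divide sum_divide_distrib[symmetric])
  have split: "(\<Sum>t\<in>T. h t * (t / M) ^ k) = h M + (\<Sum>t\<in>T - {M}. h t * (t / M) ^ k)" for k
    using assms(1-3) by (simp add: sum.remove)
  have "(\<lambda>k. h M + (\<Sum>t\<in>T - {M}. h t * (t / M) ^ k)) \<longlonglongrightarrow> h M + (\<Sum>t\<in>T - {M}. h t * 0)"
    using assms(3,4)
    by (intro tendsto_add tendsto_const tendsto_sum tendsto_mult LIMSEQ_power_zero)
       (simp add: abs_divide divide_less_eq)
  then have "(\<lambda>k::nat. 0) \<longlonglongrightarrow> h M" using scaled split by simp
  then show ?thesis using LIMSEQ_unique tendsto_const by blast
qed

lemma power_sums_vanish_imp_coeffs_zero:
  fixes h :: "real \<Rightarrow> real"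
  assumes "finite T" "\<forall>t\<in>T. 0 < t" "\<forall>k. (\<Sum>t\<in>T. h t * t ^ k) = 0"
  shows "\<forall>t\<in>T. h t = 0"
  using assms
proof (induction T rule: finite_linorder_max_induct)
  case empty
  then show ?case by simp
next
  case (insert M T)
  have "M \<notin> T" using insert.hyps(2) by blast
  have "h M = 0"
    by (rule dominant_power_coefficient_zero[of "insert M T"]) (use insert in auto)
  then have "\<forall>k. (\<Sum>t\<in>T. h t * t ^ k) = 0"
    using insert.prems(2) insert.hyps(1) \<open>M \<notin> T\<close> by simp
  then show ?case using insert \<open>h M = 0\<close> by simp
qed

lemma power_sums_vanish_imp_fiber_sums_vanish:
  fixes g b :: "'a \<Rightarrow> real"
  assumes "finite S" "\<forall>x\<in>S. 0 < b x" "\<forall>k. (\<Sum>x\<in>S. g x * b x ^ k) = 0"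
  shows "(\<Sum>x\<in>{x\<in>S. b x = v}. g x) = 0"
proof (cases "v \<in> b ` S")
  case True
  define h where "h t = (\<Sum>x\<in>{x\<in>S. b x = t}. g x)" for t
  have "(\<Sum>x\<in>S. g x * b x ^ k) = (\<Sum>t\<in>b ` S. h t * t ^ k)" for k
    unfolding h_def sum_distrib_right
    by (subst sum.image_gen[OF assms(1)]) (auto intro!: sum.cong)
  then have "\<forall>t\<in>b ` S. h t = 0"
    using assms by (intro power_sums_vanish_imp_coeffs_zero) auto
  moreover obtain x where "x \<in> S" "v = b x" using True by blast
  ultimately show ?thesis by (simp add: h_def)
next
  case False
  then have "{x\<in>S. b x = v} = {}" by auto
  then show ?thesis by (simp only: sum.empty)
qed

lemma two_valued_product_moments_vanish_imp_zero:
  fixes G :: "('i \<Rightarrow> 'v) \<Rightarrow> real" and p :: "'i \<Rightarrow> 'v \<Rightarrow> real"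
  assumes "finite S" "finite I" "x0 \<in> S"
    and "\<forall>i\<in>I. p i (x0 i) \<noteq> p i (y i)"
    and "\<forall>x\<in>S. \<forall>i\<in>I. x i = x0 i \<or> x i = y i"
    and "\<forall>x\<in>S. (\<forall>i\<in>I. x i = x0 i) \<longrightarrow> x = x0"
    and moments: "\<forall>E\<subseteq>I. (\<Sum>x\<in>S. G x * (\<Prod>i\<in>E. p i (x i))) = 0"
  shows "G x0 = 0"
proof -
  define d where "d i = p i (x0 i) - p i (y i)" for i
  define coef where "coef E = (\<Prod>i\<in>E. 1 / d i) * (\<Prod>i\<in>I - E. - p i (y i) / d i)" for E
  define delta where "delta x = (\<Prod>i\<in>I. (p i (x i) - p i (y i)) / d i)" for x
  have delta_indicator: "delta x = (if x = x0 then 1 else 0)" if "x \<in> S" for x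
  proof (cases "x = x0")
    case True
    then show ?thesis using assms(4) by (simp add: delta_def d_def)
  next
    case False
    then obtain i where "i \<in> I" "x i = y i" using assms(5,6) \<open>x \<in> S\<close> by blast
    then have "delta x = 0" unfolding delta_def using assms(2) by (intro prod_zero bexI[of _ i]) simp_all
    then show ?thesis using False by simp
  qed
  have delta_expand: "delta x = (\<Sum>E\<in>Pow I. coef E * (\<Prod>i\<in>E. p i (x i)))" for x
  proof -
    have "delta x = (\<Prod>i\<in>I. p i (x i) * (1 / d i) + - p i (y i) / d i)"
      unfolding delta_def by (simp add: diff_divide_distrib)
    also have "\<dots> = (\<Sum>E\<in>Pow I. (\<Prod>i\<in>E. p i (x i) * (1 / d i)) * (\<Prod>i\<in>I - E. - p i (y i) / d i))"
      by (rule prod_add[OF assms(2)])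
    also have "\<dots> = (\<Sum>E\<in>Pow I. coef E * (\<Prod>i\<in>E. p i (x i)))"
      by (simp add: coef_def prod_dividef mult.commute)
    finally show ?thesis .
  qed
  have "(\<Sum>x\<in>S. G x * delta x) = (\<Sum>x\<in>S. if x = x0 then G x else 0)"
    by (rule sum.cong) (simp_all add: delta_indicator)
  then have "G x0 = (\<Sum>x\<in>S. G x * delta x)" using assms(1,3) by simp
  also have "\<dots> = (\<Sum>E\<in>Pow I. coef E * (\<Sum>x\<in>S. G x * (\<Prod>i\<in>E. p i (x i))))"
    by (simp add: delta_expand sum_distrib_left mult_ac sum.swap[of _ S])
  also have "\<dots> = 0" using moments by simp
  finally show ?thesis .
qed

lemma finite_signs: "finite (signs c)"
proof -
  let ?extend = "\<lambda>f i. if i \<in> {1..c} then f i else 0"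
  have "signs c \<subseteq> ?extend ` PiE {1..c} (\<lambda>_. {1, -1::real})"
  proof
    fix x assume x: "x \<in> signs c"
    show "x \<in> ?extend ` PiE {1..c} (\<lambda>_. {1, -1})"
    proof (rule image_eqI[of _ _ "restrict x {1..c}"])
      show "x = ?extend (restrict x {1..c})"
        using x by (auto simp: signs_def fun_eq_iff)
      show "restrict x {1..c} \<in> PiE {1..c} (\<lambda>_. {1, -1})"
        using x by (auto simp: signs_def)
    qed
  qed
  then show ?thesis by (rule finite_subset) (intro finite_imageI finite_PiE; simp)
qed

lemma signs_two_valued:
  assumes "x \<in> signs c" "y \<in> signs c" "i \<in> {1..c}"
  shows "y i = x i \<or> y i = - x i"
proof -
  have "x i = 1 \<or> x i = -1" "y i = 1 \<or> y i = -1" using assms unfolding signs_def by blast+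
  then show ?thesis by auto
qed

lemma signs_eqI:
  assumes "x \<in> signs c" "y \<in> signs c" "\<forall>i\<in>{1..c}. y i = x i"
  shows "y = x"
proof
  fix i show "y i = x i" using assms by (cases "i \<in> {1..c}") (auto simp: signs_def)
qed

lemma level_set_product_moments_vanish:
  fixes \<gamma> b0 :: "'x \<Rightarrow> real" and q :: "'x \<Rightarrow> nat \<Rightarrow> real"
  assumes "finite S" "\<forall>x\<in>S. 0 < b0 x" "E \<subseteq> {1..c}"
    and "\<forall>n\<in>Wset c. (\<Sum>x\<in>S. \<gamma> x * (b0 x ^ n 0 * (\<Prod>i=1..c. q x i ^ n i))) = 0"
  shows "(\<Sum>x\<in>{x\<in>S. b0 x = v}. \<gamma> x * (\<Prod>i\<in>E. q x i)) = 0"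
proof (rule power_sums_vanish_imp_fiber_sums_vanish[OF assms(1,2)], intro allI)
  fix k
  define n :: "nat \<Rightarrow> nat" where "n j = (if j = 0 then k else if j \<in> E then 1 else 0)" for j
  have "n \<in> Wset c" using assms(3) by (auto simp: Wset_def n_def)
  then have relation: "(\<Sum>x\<in>S. \<gamma> x * (b0 x ^ n 0 * (\<Prod>i=1..c. q x i ^ n i))) = 0"
    using assms(4) by blast
  have product: "(\<Prod>i=1..c. q x i ^ n i) = (\<Prod>i\<in>E. q x i)" for x
  proof -
    have "(\<Prod>i=1..c. q x i ^ n i) = (\<Prod>i\<in>{1..c}. if i \<in> E then q x i else 1)"
      by (rule prod.cong) (auto simp: n_def)
    also have "\<dots> = (\<Prod>i\<in>{i\<in>{1..c}. i \<in> E}. q x i)"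
      by (rule prod.inter_filter[symmetric]) simp
    also have "{i\<in>{1..c}. i \<in> E} = E" using assms(3) by auto
    finally show ?thesis .
  qed
  from relation have "(\<Sum>x\<in>S. \<gamma> x * (b0 x ^ k * (\<Prod>i\<in>E. q x i))) = 0"
    by (simp only: product) (simp add: n_def)
  then show "(\<Sum>x\<in>S. \<gamma> x * (\<Prod>i\<in>E. q x i) * b0 x ^ k) = 0"
    by (simp add: mult_ac)
qed

theorem lemma4:
  fixes c :: nat
    and ra rb rc rd :: "nat \<Rightarrow> nat \<Rightarrow> real"
    and beta0 :: "(nat \<Rightarrow> real) \<Rightarrow> real"
  assumes "1 \<le> c"
    and "irreducible_model c ra rb rc rd"
    and "assumption_A c ra rb rc rd"
    and "ergodic_E c ra rb rc rd"
    and "\<forall>x\<in>signs c. 0 < beta0 x \<and> beta0 x < 1 \<and> eq_Ex c ra rb rc rd x (beta0 x)"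
  shows "\<forall>\<gamma> :: (nat \<Rightarrow> real) \<Rightarrow> real.
           (\<forall>n\<in>Wset c. (\<Sum>x\<in>signs c. \<gamma> x * (beta0 x ^ n 0 *
               (\<Prod>i=1..c. beta_i (ra i) (rb i) (rc i) (rd i) (x i) (beta0 x) ^ n i))) = 0)
           \<longrightarrow> (\<forall>x\<in>signs c. \<gamma> x = 0)"
proof (intro allI impI ballI)
  fix \<gamma> :: "(nat \<Rightarrow> real) \<Rightarrow> real" and x0
  assume dependence: "\<forall>n\<in>Wset c. (\<Sum>x\<in>signs c. \<gamma> x * (beta0 x ^ n 0 *
               (\<Prod>i=1..c. beta_i (ra i) (rb i) (rc i) (rd i) (x i) (beta0 x) ^ n i))) = 0"
    and x0: "x0 \<in> signs c"
  define v where "v = beta0 x0"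
  define S where "S = {x \<in> signs c. beta0 x = v}"
  define p where "p i s = beta_i (ra i) (rb i) (rc i) (rd i) s v" for i s
  have moments: "\<forall>E\<subseteq>{1..c}. (\<Sum>x\<in>S. \<gamma> x * (\<Prod>i\<in>E. p i (x i))) = 0"
  proof (intro allI impI)
    fix E assume "E \<subseteq> {1..c}"
    then have "(\<Sum>x\<in>S. \<gamma> x * (\<Prod>i\<in>E. beta_i (ra i) (rb i) (rc i) (rd i) (x i) (beta0 x))) = 0"
      unfolding S_def using assms(5)
      by (intro level_set_product_moments_vanish[OF finite_signs _ _ dependence]) auto
    also have "(\<Sum>x\<in>S. \<gamma> x * (\<Prod>i\<in>E. beta_i (ra i) (rb i) (rc i) (rd i) (x i) (beta0 x)))
        = (\<Sum>x\<in>S. \<gamma> x * (\<Prod>i\<in>E. p i (x i)))"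
      by (rule sum.cong) (simp_all add: S_def p_def)
    finally show "(\<Sum>x\<in>S. \<gamma> x * (\<Prod>i\<in>E. p i (x i))) = 0" .
  qed
  have S: "finite S" "x0 \<in> S" using finite_signs x0 by (auto simp: S_def v_def)
  have distinct: "\<forall>i\<in>{1..c}. p i (x0 i) \<noteq> p i (- x0 i)"
    using assms(5) x0 assumption_A_beta_i_sign_flip[OF assms(3)]
    by (auto simp: p_def v_def signs_def)
  have two_valued: "\<forall>x\<in>S. \<forall>i\<in>{1..c}. x i = x0 i \<or> x i = - x0 i"
    using x0 signs_two_valued by (auto simp: S_def)
  have determined: "\<forall>x\<in>S. (\<forall>i\<in>{1..c}. x i = x0 i) \<longrightarrow> x = x0"
    using x0 signs_eqI by (auto simp: S_def)
  show "\<gamma> x0 = 0"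
    by (rule two_valued_product_moments_vanish_imp_zero[OF S(1) finite_atLeastAtMost S(2) distinct
          two_valued determined moments])
qed

end
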